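(* Let $q$ be a prime power and $1\le s<t$ integers. If there exists a linear OA$(s,t,q)$, then there exist a linear AOA$(s,t,t,q)$ and a linear AOA$(t-s,t,t,q)$.
   Context: An orthogonal array OA$(t,k,v)$ (with $1\le t\le k$) is a $v^t\times k$ array with entries from a set $X$ of size $v$ such that, for every choice of $t$ of its columns, each $t$-tuple in $X^t$ appears exactly once as a row of the corresponding $v^t\times t$ subarray. For integers $1\le s\le t\le k$, an augmented orthogonal array AOA$(s,t,k,v)$ is a $v^t\times(k+1)$ array $A$ such that: (1) the first $k$ columns of $A$ form an OA$(t,k,v)$ on a symbol set $X$ of size $v$; (2) the last column of $A$ has entries from a set $Y$ of size $v^{t-s}$; (3) for any choice of $s$ of the first $k$ columns, these $s$ columns together with the last column contain every $(s+1)$-tuple of $X^s\times Y$ exactly once as a row. For a prime power $q$, an OA$(t,k,q)$ over $\mathbb{F}_q$ is linear if its set of rows is a $t$-dimensional $\mathbb{F}_q$-subspace of $\mathbb{F}_q^k$; an AOA$(s,t,k,q)$ is linear if $X=\mathbb{F}_q$, $Y=\mathbb{F}_q^{t-s}$, and its set of rows, regarded as vectors in $\mathbb{F}_q^{k}\times\mathbb{F}_q^{t-s}=\mathbb{F}_q^{k+t-s}$, is an $\mathbb{F}_q$-linear subspace. *)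

theory Defs
  imports "HOL-Library.FuncSet"
begin

text \<open>Arrays are lists of rows; a row of an array with k columns is a list of length k.
  Column indices are 0..<k. A choice of t columns is a t-element subset of {0..<k}.\<close>

definition is_OA :: "nat \<Rightarrow> nat \<Rightarrow> 'a set \<Rightarrow> 'a list list \<Rightarrow> bool" where
  "is_OA t k X A \<longleftrightarrow>
     1 \<le> t \<and> t \<le> k \<and> finite X \<and>
     length A = card X ^ t \<and>
     (\<forall>r\<in>set A. length r = k \<and> set r \<subseteq> X) \<and>
     (\<forall>S. S \<subseteq> {0..<k} \<and> card S = t \<longrightarrow>
        (\<forall>u \<in> S \<rightarrow>\<^sub>E X. length (filter (\<lambda>r. \<forall>i\<in>S. r ! i = u i) A) = 1))"

text \<open>Augmented orthogonal array AOA(s,t,k,v): rows are pairs (first k entries, last entry).\<close>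

definition is_AOA :: "nat \<Rightarrow> nat \<Rightarrow> nat \<Rightarrow> 'a set \<Rightarrow> 'b set \<Rightarrow> ('a list \<times> 'b) list \<Rightarrow> bool" where
  "is_AOA s t k X Y A \<longleftrightarrow>
     1 \<le> s \<and> s \<le> t \<and> t \<le> k \<and>
     is_OA t k X (map fst A) \<and>
     finite Y \<and> card Y = card X ^ (t - s) \<and>
     (\<forall>r\<in>set A. snd r \<in> Y) \<and>
     (\<forall>S. S \<subseteq> {0..<k} \<and> card S = s \<longrightarrow>
        (\<forall>u \<in> S \<rightarrow>\<^sub>E X. \<forall>y\<in>Y.
           length (filter (\<lambda>r. (\<forall>i\<in>S. fst r ! i = u i) \<and> snd r = y) A) = 1))"

text \<open>F_q^n represented as lists of length n; linear subspace with componentwise operations.\<close>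

definition lin_subspace :: "nat \<Rightarrow> 'a::field list set \<Rightarrow> bool" where
  "lin_subspace n V \<longleftrightarrow>
     (\<forall>x\<in>V. length x = n) \<and>
     replicate n 0 \<in> V \<and>
     (\<forall>x\<in>V. \<forall>y\<in>V. map2 (+) x y \<in> V) \<and>
     (\<forall>c. \<forall>x\<in>V. map ((*) c) x \<in> V)"

text \<open>Linear OA(t,k,q): rows form a t-dimensional subspace of F_q^k. A subspace of F_q^k
  has dimension t iff it has q^t elements.\<close>

definition linear_OA :: "nat \<Rightarrow> nat \<Rightarrow> 'a::{finite,field} list list \<Rightarrow> bool" where
  "linear_OA t k A \<longleftrightarrow>
     is_OA t k (UNIV :: 'a set) A \<and> lin_subspace k (set A) \<and>
     card (set A) = card (UNIV :: 'a set) ^ t"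

text \<open>Linear AOA(s,t,k,q): X = F_q, Y = F_q^(t-s), rows (as vectors in F_q^(k+t-s)) form a subspace.\<close>

definition linear_AOA :: "nat \<Rightarrow> nat \<Rightarrow> nat \<Rightarrow> ('a::{finite,field} list \<times> 'a list) list \<Rightarrow> bool" where
  "linear_AOA s t k A \<longleftrightarrow>
     is_AOA s t k (UNIV :: 'a set) {y. length y = t - s} A \<and>
     lin_subspace (k + (t - s)) ((\<lambda>(r, y). r @ y) ` set A)"

end

theory Submission
  imports Defs
begin

text \<open>The rows of a linear OA(s,t,q) form an s-dimensional code C of length t in which every
  s coordinates are an information set (an MDS code). Both augmented arrays are graphs of
  linear maps h from \<open>\<bbbF>\<^sub>q\<^sup>t\<close> to \<open>\<bbbF>\<^sub>q\<^sup>t\<^sup>-\<^sup>p\<close>, and by counting such a graph is an AOA(p,t,t,q) as soon as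
  the map x \<mapsto> (x restricted to S, h x) is injective for every p-set S of coordinates.
  For p = s let h x be the last t - s coordinates of x minus the codeword agreeing with x on
  the first s coordinates: its kernel lies in C, and a codeword vanishing on s coordinates is 0.
  For p = t - s let h x list the inner products of x with a basis of C: its kernel is the
  dual code, which is again MDS, so its words vanishing on t - s coordinates are 0.\<close>

lemma finite_lists_of_length: "finite {x :: 'a::finite list. length x = n}"
  using finite_lists_length_eq[of "UNIV :: 'a set" n] by simp

lemma card_lists_of_length: "card {x :: 'a::finite list. length x = n} = card (UNIV :: 'a set) ^ n"
  using card_lists_length_eq[of "UNIV :: 'a set" n] by simp

lemma length_filter_distinct: "distinct L \<Longrightarrow> length (filter P L) = card {x \<in> set L. P x}"
  by (simp add: distinct_length_filter Collect_conj_eq Int_commute)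

lemma card_Collect_eq_1_iff: "card {x. P x} = 1 \<longleftrightarrow> (\<exists>!x. P x)"
proof
  assume "card {x. P x} = 1"
  then obtain a where "{x. P x} = {a}" by (auto simp: card_1_singleton_iff)
  then show "\<exists>!x. P x" by (metis mem_Collect_eq singletonD singletonI)
next
  assume "\<exists>!x. P x"
  then obtain a where "{x. P x} = {a}" by blast
  then show "card {x. P x} = 1" by simp
qed

lemma map2_diff_eq_replicate_0_iff:
  fixes x y :: "'a::ab_group_add list"
  assumes "length x = n" "length y = n"
  shows "map2 (-) x y = replicate n 0 \<longleftrightarrow> x = y"
proof
  assume d: "map2 (-) x y = replicate n 0"
  have "x ! i = y ! i" if "i < n" for i
    using arg_cong[OF d, of "\<lambda>l. l ! i"] assms that by simp
  then show "x = y" using assms by (intro nth_equalityI) auto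
qed (use assms in \<open>auto intro: nth_equalityI\<close>)

locale list_linear =
  fixes n m :: nat and h :: "'a::field list \<Rightarrow> 'a list"
  assumes length_map: "length x = n \<Longrightarrow> length (h x) = m"
    and map_add: "length x = n \<Longrightarrow> length y = n \<Longrightarrow> h (map2 (+) x y) = map2 (+) (h x) (h y)"
    and map_smult: "length x = n \<Longrightarrow> h (map ((*) c) x) = map ((*) c) (h x)"
begin

lemma map_zero: "h (replicate n 0) = replicate m 0"
proof -
  have "h (replicate n 0) = h (map ((*) 0) (replicate n 0))" by simp
  also have "\<dots> = map ((*) 0) (h (replicate n 0))" by (rule map_smult) simp
  also have "\<dots> = replicate m 0"
    using length_map[of "replicate n 0"] by (intro nth_equalityI) auto
  finally show ?thesis .
qed

lemma map_diff:
  assumes "length x = n" "length y = n"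
  shows "h (map2 (-) x y) = map2 (-) (h x) (h y)"
proof -
  have "map2 (-) x y = map2 (+) x (map ((*) (-1)) y)"
    using assms by (intro nth_equalityI) auto
  then have "h (map2 (-) x y) = map2 (+) (h x) (map ((*) (-1)) (h y))"
    using assms by (simp add: map_add map_smult)
  also have "\<dots> = map2 (-) (h x) (h y)"
    using assms length_map by (intro nth_equalityI) auto
  finally show ?thesis .
qed

lemma graph_lin_subspace: "lin_subspace (n + m) ((\<lambda>x. x @ h x) ` {x. length x = n})"
  unfolding lin_subspace_def
proof (intro conjI ballI allI)
  show "replicate (n + m) 0 \<in> (\<lambda>x. x @ h x) ` {x. length x = n}"
    using map_zero by (auto simp: replicate_add intro!: image_eqI[of _ _ "replicate n 0"])
next
  fix z w assume "z \<in> (\<lambda>x. x @ h x) ` {x. length x = n}" "w \<in> (\<lambda>x. x @ h x) ` {x. length x = n}"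
  then obtain x y where "length x = n" "length y = n" "z = x @ h x" "w = y @ h y" by auto
  then show "map2 (+) z w \<in> (\<lambda>x. x @ h x) ` {x. length x = n}"
    using length_map by (auto simp: map_add intro!: image_eqI[of _ _ "map2 (+) x y"])
next
  fix c z assume "z \<in> (\<lambda>x. x @ h x) ` {x. length x = n}"
  then obtain x where "length x = n" "z = x @ h x" by auto
  then show "map ((*) c) z \<in> (\<lambda>x. x @ h x) ` {x. length x = n}"
    by (auto simp: map_smult intro!: image_eqI[of _ _ "map ((*) c) x"])
qed (use length_map in auto)

end

lemma ex1_preimage_of_restriction:
  fixes h :: "'a::{finite,field} list \<Rightarrow> 'a list"
  assumes h: "list_linear n m h"
    and S: "S \<subseteq> {0..<n}" "card S + m = n"
    and ker: "\<And>x. length x = n \<Longrightarrow> \<forall>i\<in>S. x ! i = 0 \<Longrightarrow> h x = replicate m 0 \<Longrightarrow> x = replicate n 0"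
    and u: "u \<in> S \<rightarrow>\<^sub>E UNIV" and y: "length y = m"
  shows "\<exists>!x. length x = n \<and> (\<forall>i\<in>S. x ! i = u i) \<and> h x = y"
proof -
  define F where "F x = (restrict ((!) x) S, h x)" for x
  have F_eq_iff: "F x = (u, y) \<longleftrightarrow> (\<forall>i\<in>S. x ! i = u i) \<and> h x = y" for x
    using u by (auto simp: F_def restrict_def PiE_def extensional_def)
  have inj: "inj_on F {x. length x = n}"
  proof (rule inj_onI)
    fix x x' assume x: "x \<in> {x. length x = n}" and x': "x' \<in> {x. length x = n}" and "F x = F x'"
    then have "\<forall>i\<in>S. x ! i = x' ! i" "h x = h x'"
      by (auto simp: F_def dest: fun_cong split: if_splits)
    moreover have "length (h x) = m" using x list_linear.length_map[OF h] by simp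
    ultimately have "\<forall>i\<in>S. map2 (-) x x' ! i = 0" "h (map2 (-) x x') = replicate m 0"
      using x x' S(1) by (auto simp: list_linear.map_diff[OF h] map2_diff_eq_replicate_0_iff)
    then have "map2 (-) x x' = replicate n 0" using ker x x' by simp
    then show "x = x'" using x x' map2_diff_eq_replicate_0_iff by auto
  qed
  have image_F: "F ` {x. length x = n} = (S \<rightarrow>\<^sub>E UNIV) \<times> {y. length y = m}"
  proof (rule card_subset_eq)
    have "finite S" using S(1) finite_subset by blast
    then show "finite ((S \<rightarrow>\<^sub>E (UNIV :: 'a set)) \<times> {y :: 'a list. length y = m})"
      by (intro finite_cartesian_product finite_PiE finite_lists_of_length) auto
    show "F ` {x. length x = n} \<subseteq> (S \<rightarrow>\<^sub>E UNIV) \<times> {y. length y = m}"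
      using list_linear.length_map[OF h] by (auto simp: F_def)
    show "card (F ` {x. length x = n}) = card ((S \<rightarrow>\<^sub>E (UNIV :: 'a set)) \<times> {y :: 'a list. length y = m})"
      using \<open>finite S\<close> S(2) inj
      by (simp add: card_image card_lists_of_length card_cartesian_product card_PiE power_add flip: S(2))
  qed
  have "(u, y) \<in> F ` {x. length x = n}" using image_F u y by simp
  then obtain x where x: "length x = n" "F x = (u, y)" by auto
  show ?thesis
  proof (rule ex1I)
    show "length x = n \<and> (\<forall>i\<in>S. x ! i = u i) \<and> h x = y" using x F_eq_iff by simp
    fix x' assume "length x' = n \<and> (\<forall>i\<in>S. x' ! i = u i) \<and> h x' = y"
    moreover from this have "F x' = F x" unfolding x(2) F_eq_iff by simp
    ultimately show "x' = x" using x(1) inj_onD[OF inj] by simp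
  qed
qed

lemma is_OA_all_lists:
  fixes L :: "'a::finite list list"
  assumes L: "distinct L" "set L = {x. length x = n}" and "1 \<le> n"
  shows "is_OA n n UNIV L"
  unfolding is_OA_def
proof (intro conjI ballI allI impI)
  show "length L = card (UNIV :: 'a set) ^ n"
    using L by (metis card_lists_of_length distinct_card)
next
  fix S :: "nat set" and u :: "nat \<Rightarrow> 'a"
  assume "S \<subseteq> {0..<n} \<and> card S = n"
  then have S: "S = {0..<n}"
    by (metis card_atLeastLessThan card_subset_eq diff_zero finite_atLeastLessThan)
  have "{x \<in> set L. \<forall>i\<in>S. x ! i = u i} = {map u [0..<n]}"
  proof (intro equalityI subsetI)
    fix x assume "x \<in> {x \<in> set L. \<forall>i\<in>S. x ! i = u i}"
    then show "x \<in> {map u [0..<n]}" using L(2) S by (simp add: list_eq_iff_nth_eq)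
  qed (use L(2) S in simp)
  then show "length (filter (\<lambda>r. \<forall>i\<in>S. r ! i = u i) L) = 1"
    by (simp add: length_filter_distinct[OF L(1)])
qed (use assms in auto)

lemma linear_AOA_of_graph:
  fixes h :: "'a::{finite,field} list \<Rightarrow> 'a list"
  assumes h: "list_linear n (n - p) h" and p: "1 \<le> p" "p \<le> n"
    and ker: "\<And>S x. S \<subseteq> {0..<n} \<Longrightarrow> card S = p \<Longrightarrow> length x = n \<Longrightarrow> \<forall>i\<in>S. x ! i = 0 \<Longrightarrow>
      h x = replicate (n - p) 0 \<Longrightarrow> x = replicate n 0"
  shows "\<exists>B :: ('a list \<times> 'a list) list. linear_AOA p n n B"
proof -
  obtain L :: "'a list list" where L: "distinct L" "set L = {x. length x = n}"
    using finite_distinct_list[OF finite_lists_of_length] by blast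
  define B where "B = map (\<lambda>x. (x, h x)) L"
  have "is_AOA p n n UNIV {y. length y = n - p} B"
    unfolding is_AOA_def
  proof (intro conjI allI impI ballI)
    show "is_OA n n UNIV (map fst B)"
      using is_OA_all_lists[OF L] p by (simp add: B_def comp_def)
    show "finite {y :: 'a list. length y = n - p}" by (rule finite_lists_of_length)
    show "card {y :: 'a list. length y = n - p} = card (UNIV :: 'a set) ^ (n - p)"
      by (rule card_lists_of_length)
    fix r assume "r \<in> set B"
    then show "snd r \<in> {y. length y = n - p}"
      using L list_linear.length_map[OF h] by (auto simp: B_def)
  next
    fix S :: "nat set" and u :: "nat \<Rightarrow> 'a" and y :: "'a list"
    assume S: "S \<subseteq> {0..<n} \<and> card S = p" and u: "u \<in> S \<rightarrow>\<^sub>E UNIV"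
      and y: "y \<in> {y :: 'a list. length y = n - p}"
    have "\<exists>!x. length x = n \<and> (\<forall>i\<in>S. x ! i = u i) \<and> h x = y"
      by (rule ex1_preimage_of_restriction[OF h _ _ _ u]) (use S ker y p in auto)
    then have "card {x. length x = n \<and> (\<forall>i\<in>S. x ! i = u i) \<and> h x = y} = 1"
      by (simp only: card_Collect_eq_1_iff)
    then show "length (filter (\<lambda>r. (\<forall>i\<in>S. fst r ! i = u i) \<and> snd r = y) B) = 1"
      using L by (simp add: B_def comp_def length_filter_distinct)
  qed (use p in auto)
  moreover have "(\<lambda>(r, y). r @ y) ` set B = (\<lambda>x. x @ h x) ` {x. length x = n}"
    using L by (auto simp: B_def)
  ultimately have "linear_AOA p n n B"
    using list_linear.graph_lin_subspace[OF h] by (simp add: linear_AOA_def)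
  then show ?thesis by blast
qed

definition unit_list :: "nat \<Rightarrow> nat \<Rightarrow> 'a::zero_neq_one list" where
  "unit_list n j = map (\<lambda>i. if i = j then 1 else 0) [0..<n]"

definition dot :: "nat \<Rightarrow> 'a::comm_semiring_1 list \<Rightarrow> 'a list \<Rightarrow> 'a" where
  "dot n x y = (\<Sum>i<n. x ! i * y ! i)"

lemma length_unit_list [simp]: "length (unit_list n j) = n"
  by (simp add: unit_list_def)

lemma linear_functional_expansion:
  fixes \<phi> :: "'a::field list \<Rightarrow> 'a"
  assumes add: "\<And>x y. length x = n \<Longrightarrow> length y = n \<Longrightarrow> \<phi> (map2 (+) x y) = \<phi> x + \<phi> y"
    and smult: "\<And>c x. length x = n \<Longrightarrow> \<phi> (map ((*) c) x) = c * \<phi> x"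
    and y: "length y = n"
  shows "\<phi> y = (\<Sum>j<n. y ! j * \<phi> (unit_list n j))"
proof -
  define prefix where "prefix k = map (\<lambda>i. if i < k then y ! i else 0) [0..<n]" for k
  have length_prefix: "length (prefix k) = n" for k by (simp add: prefix_def)
  have "k \<le> n \<Longrightarrow> \<phi> (prefix k) = (\<Sum>j<k. y ! j * \<phi> (unit_list n j))" for k
  proof (induction k)
    case 0
    have "prefix 0 = map ((*) 0) (prefix 0)" by (simp add: prefix_def)
    then have "\<phi> (prefix 0) = 0 * \<phi> (prefix 0)" using smult length_prefix by metis
    then show ?case by simp
  next
    case (Suc k)
    have "prefix (Suc k) = map2 (+) (prefix k) (map ((*) (y ! k)) (unit_list n k))"
      by (rule nth_equalityI) (auto simp: prefix_def unit_list_def less_Suc_eq)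
    then show ?case using Suc by (simp add: add smult length_prefix)
  qed
  moreover have "prefix n = y" using y by (simp add: prefix_def list_eq_iff_nth_eq)
  ultimately show ?thesis by force
qed

lemma linear_OA_ex1_codeword:
  assumes A: "linear_OA s t A" and S: "S \<subseteq> {0..<t}" "card S = s"
  shows "\<exists>!c. c \<in> set A \<and> (\<forall>i\<in>S. c ! i = f i)"
proof -
  have OA: "is_OA s t UNIV A" and "card (set A) = card (UNIV :: 'a set) ^ s"
    using A by (auto simp: linear_OA_def)
  then have "distinct A" by (intro card_distinct) (simp add: is_OA_def)
  have "\<forall>u \<in> S \<rightarrow>\<^sub>E UNIV. length (filter (\<lambda>r. \<forall>i\<in>S. r ! i = u i) A) = 1"
    using OA S unfolding is_OA_def by blast
  from this[rule_format, of "restrict f S"]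
  have "length (filter (\<lambda>r. \<forall>i\<in>S. r ! i = f i) A) = 1" by simp
  then have "card {c \<in> set A. \<forall>i\<in>S. c ! i = f i} = 1"
    by (simp add: length_filter_distinct[OF \<open>distinct A\<close>])
  then show ?thesis by (simp only: card_Collect_eq_1_iff)
qed

locale mds_code =
  fixes s t :: nat and C :: "'a::field list set"
  assumes subspace: "lin_subspace t C" and s_le_t: "s \<le> t"
    and ex1_codeword: "\<And>S f. S \<subseteq> {0..<t} \<Longrightarrow> card S = s \<Longrightarrow> \<exists>!c. c \<in> C \<and> (\<forall>i\<in>S. c ! i = f i)"
begin

lemma length_codeword: "c \<in> C \<Longrightarrow> length c = t"
  using subspace by (simp add: lin_subspace_def)

lemma zero_codeword: "replicate t 0 \<in> C"
  using subspace by (simp add: lin_subspace_def)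

lemma codeword_eq_zero:
  assumes "S \<subseteq> {0..<t}" "card S = s" "c \<in> C" "\<forall>i\<in>S. c ! i = 0"
  shows "c = replicate t 0"
proof -
  have "replicate t 0 \<in> C \<and> (\<forall>i\<in>S. replicate t 0 ! i = 0)"
    using zero_codeword assms(1) by auto
  then show ?thesis using ex1_codeword[OF assms(1,2), of "\<lambda>_. 0"] assms(3,4) by blast
qed

definition encode :: "'a list \<Rightarrow> 'a list" where
  "encode x = (THE c. c \<in> C \<and> (\<forall>i\<in>{0..<s}. c ! i = x ! i))"

lemma encode: "encode x \<in> C" "i < s \<Longrightarrow> encode x ! i = x ! i"
  using theI'[OF ex1_codeword[of "{0..<s}" "(!) x"]] s_le_t by (auto simp: encode_def)

lemma encode_unique: "c \<in> C \<Longrightarrow> (\<And>i. i < s \<Longrightarrow> c ! i = x ! i) \<Longrightarrow> encode x = c"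
  unfolding encode_def using s_le_t by (intro the1_equality ex1_codeword) auto

lemma length_encode: "length (encode x) = t"
  using encode(1) length_codeword by blast

lemma encode_codeword: "c \<in> C \<Longrightarrow> encode c = c"
  by (rule encode_unique) auto

lemma list_linear_encode: "list_linear t t encode"
proof
  fix x y :: "'a list" and c :: 'a
  assume x: "length x = t"
  show "length (encode x) = t" by (rule length_encode)
  have s_t: "i < s \<Longrightarrow> i < t" for i using s_le_t by simp
  show "encode (map ((*) c) x) = map ((*) c) (encode x)"
  proof (rule encode_unique)
    show "map ((*) c) (encode x) \<in> C" using subspace encode(1) by (simp add: lin_subspace_def)
  qed (use x encode(2) length_encode s_t in simp)
  assume y: "length y = t"
  show "encode (map2 (+) x y) = map2 (+) (encode x) (encode y)"
  proof (rule encode_unique)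
    show "map2 (+) (encode x) (encode y) \<in> C" using subspace encode(1) by (simp add: lin_subspace_def)
  qed (use x y encode(2) length_encode s_t in simp)
qed

definition redundancy :: "'a list \<Rightarrow> 'a list" where
  "redundancy x = drop s (map2 (-) x (encode x))"

lemma list_linear_redundancy: "list_linear t (t - s) redundancy"
proof
  fix x y :: "'a list" and c :: 'a
  assume x: "length x = t"
  show "length (redundancy x) = t - s" using x by (simp add: redundancy_def length_encode)
  show "redundancy (map ((*) c) x) = map ((*) c) (redundancy x)"
    unfolding redundancy_def list_linear.map_smult[OF list_linear_encode x]
    using x by (intro nth_equalityI) (auto simp: length_encode algebra_simps)
  assume y: "length y = t"
  show "redundancy (map2 (+) x y) = map2 (+) (redundancy x) (redundancy y)"
    unfolding redundancy_def list_linear.map_add[OF list_linear_encode x y]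
    using x y by (intro nth_equalityI) (auto simp: length_encode algebra_simps)
qed

lemma redundancy_eq_zero_imp_codeword:
  assumes x: "length x = t" and "redundancy x = replicate (t - s) 0"
  shows "x \<in> C"
proof -
  have "x ! i = encode x ! i" if "i < t" for i
  proof (cases "i < s")
    case False
    then have "redundancy x ! (i - s) = 0" using assms that by simp
    then show ?thesis using False that x by (simp add: redundancy_def length_encode)
  qed (simp add: encode(2))
  then have "x = encode x" using x by (simp add: list_eq_iff_nth_eq length_encode)
  then show ?thesis using encode(1) by metis
qed

lemma redundancy_kernel:
  assumes "S \<subseteq> {0..<t}" "card S = s" "length x = t" "\<forall>i\<in>S. x ! i = 0"
    and "redundancy x = replicate (t - s) 0"
  shows "x = replicate t 0"
  using assms codeword_eq_zero redundancy_eq_zero_imp_codeword by blast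

text \<open>The words \<open>encode (unit_list t j)\<close>, \<open>j < s\<close>, are the rows of a generator matrix of \<open>C\<close>,
  i.e. of a parity-check matrix of the dual code.\<close>

definition dual_syndrome :: "'a list \<Rightarrow> 'a list" where
  "dual_syndrome x = map (\<lambda>j. dot t x (encode (unit_list t j))) [0..<s]"

lemma list_linear_dual_syndrome: "list_linear t s dual_syndrome"
  by unfold_locales
    (simp_all add: dual_syndrome_def dot_def list_eq_iff_nth_eq sum.distrib sum_distrib_left
      algebra_simps)

lemma dual_syndrome_eq_zero_imp_orthogonal:
  assumes x: "length x = t" and syn: "dual_syndrome x = replicate s 0" and c: "c \<in> C"
  shows "dot t x c = 0"
proof -
  have basis: "dot t x (encode (unit_list t j)) = 0" if "j < t" for j
  proof (cases "j < s")
    case True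
    then show ?thesis using syn by (simp add: dual_syndrome_def list_eq_iff_nth_eq)
  next
    case False
    then have "encode (unit_list t j) = replicate t 0"
      using zero_codeword s_le_t by (intro encode_unique) (auto simp: unit_list_def)
    then show ?thesis by (simp add: dot_def)
  qed
  have "dot t x (encode y) = (\<Sum>j<t. y ! j * dot t x (encode (unit_list t j)))" if "length y = t" for y
    using that list_linear.map_add[OF list_linear_encode] list_linear.map_smult[OF list_linear_encode]
    by (intro linear_functional_expansion)
      (simp_all add: dot_def length_encode sum.distrib sum_distrib_left algebra_simps)
  then have "dot t x (encode c) = 0" using basis length_codeword[OF c] by simp
  then show ?thesis using encode_codeword[OF c] by simp
qed

lemma orthogonal_vanishing_imp_zero:
  assumes T: "T \<subseteq> {0..<t}" "card T = t - s" and x: "length x = t" "\<forall>i\<in>T. x ! i = 0"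
    and orth: "\<And>c. c \<in> C \<Longrightarrow> dot t x c = 0"
  shows "x = replicate t 0"
proof -
  have "x ! k = 0" if k: "k < t" "k \<notin> T" for k
  proof -
    define S where "S = {0..<t} - T"
    have "finite T" using T(1) finite_subset by blast
    then have S: "S \<subseteq> {0..<t}" "card S = s"
      using T s_le_t by (simp_all add: S_def card_Diff_subset)
    obtain c where c: "c \<in> C" "\<forall>i\<in>S. c ! i = (if i = k then 1 else 0)"
      using ex1_codeword[OF S, of "\<lambda>i. if i = k then 1 else 0"] by blast
    have "dot t x c = (\<Sum>i<t. if i = k then x ! k else 0)"
      unfolding dot_def
    proof (rule sum.cong)
      fix i assume "i \<in> {..<t}"
      then show "x ! i * c ! i = (if i = k then x ! k else 0)"
        using x(2) c(2) by (cases "i \<in> T") (auto simp: S_def)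
    qed simp
    then show ?thesis using orth[OF c(1)] k by simp
  qed
  then show ?thesis using x by (auto simp: list_eq_iff_nth_eq)
qed

lemma dual_syndrome_kernel:
  assumes "T \<subseteq> {0..<t}" "card T = t - s" "length x = t" "\<forall>i\<in>T. x ! i = 0"
    and "dual_syndrome x = replicate s 0"
  shows "x = replicate t 0"
  by (rule orthogonal_vanishing_imp_zero[OF assms(1-4) dual_syndrome_eq_zero_imp_orthogonal[OF assms(3,5)]])

end

theorem theorem3p4:
  fixes s t :: nat
  assumes "1 \<le> s" and "s < t"
    and "\<exists>A :: 'a::{finite,field} list list. linear_OA s t A"
  shows "(\<exists>B :: ('a list \<times> 'a list) list. linear_AOA s t t B) \<and>
         (\<exists>B :: ('a list \<times> 'a list) list. linear_AOA (t - s) t t B)"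
proof -
  obtain A :: "'a list list" where A: "linear_OA s t A" using assms(3) by blast
  interpret mds_code s t "set A"
  proof
    show "lin_subspace t (set A)" using A by (simp add: linear_OA_def)
    show "s \<le> t" using assms(2) by simp
  qed (rule linear_OA_ex1_codeword[OF A])
  have "\<exists>B :: ('a list \<times> 'a list) list. linear_AOA s t t B"
    by (rule linear_AOA_of_graph[OF list_linear_redundancy _ _ redundancy_kernel])
      (use assms(1,2) in auto)
  moreover have "\<exists>B :: ('a list \<times> 'a list) list. linear_AOA (t - s) t t B"
    using assms(1,2) list_linear_dual_syndrome dual_syndrome_kernel
    by (intro linear_AOA_of_graph) (simp_all add: diff_diff_cancel)
  ultimately show ?thesis ..
qed

end
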